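(* For all integers $i,N,n$ with $0\le i\le N\le n$, $$\sum_{i_1,i_2}\binom{N}{i_1}\binom{N}{i_2}\binom{i_1}{i}\binom{i_2}{i}(-1)^{i_1+i_2}\,(n-i_1)_{N-i_1}\,(n-i_2)_{N-i_2}\,(n)_{i_1+i_2-i}\;i!=N!\,(n)_N\binom{N}{i}(-1)^{N-i},$$ where the sum is over all integers $i_1,i_2$.
   Context: Convention: the binomial coefficient $\binom{k}{l}$ is defined as the usual binomial coefficient when $k\ge0$, $l\ge0$ and $k\ge l$, and is $0$ otherwise; only terms with $i\le i_1,i_2\le N$ contribute. $(m)_j=m(m-1)\cdots(m-j+1)$ denotes the falling factorial, with $(m)_0=1$. In particular, $(m)_j=0$ when $m$ is a nonnegative integer and $j>m$. *)

theory Defs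
  imports Main
begin

definition ffact :: "int \<Rightarrow> nat \<Rightarrow> int" where
  "ffact m j = (\<Prod>k<j. m - int k)"

end

theory Submission
  imports Defs
begin

text \<open>Splitting \<open>(n)\<^bsub>i1+i2-i\<^esub> = (n)\<^bsub>i1\<^esub> (n-i1)\<^bsub>i2-i\<^esub>\<close> and
  \<open>(n)\<^bsub>i1\<^esub> (n-i1)\<^bsub>N-i1\<^esub> = (n)\<^bsub>N\<^esub>\<close> factors \<open>(n)\<^bsub>N\<^esub>\<close> out of every
  summand. With \<open>i2 = i + j\<close> and \<open>C(N,i2) C(i2,i) = C(N,i) C(N-i,j)\<close>, the sum over \<open>i2\<close>
  becomes an alternating Vandermonde convolution and equals \<open>C(N,i) (-1)\<^sup>i (i1-i)\<^bsub>N-i\<^esub>\<close>.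
  This falling factorial vanishes for \<open>i \<le> i1 < N\<close>, so only \<open>i1 = N\<close> survives in
  the outer sum, and \<open>i! (N-i)! C(N,i) = N!\<close>.\<close>

lemma ffact_0 [simp]: "ffact m 0 = 1"
  by (simp add: ffact_def)

lemma ffact_Suc: "ffact m (Suc k) = ffact m k * (m - int k)"
  by (simp add: ffact_def)

lemma ffact_eq_pochhammer_neg: "ffact m k = (-1) ^ k * pochhammer (- m) k"
  by (induction k) (simp_all add: ffact_Suc pochhammer_Suc algebra_simps)

lemma ffact_eq_pochhammer: "ffact m k = pochhammer (m - int k + 1) k"
  by (simp add: ffact_eq_pochhammer_neg pochhammer_minus)

lemma ffact_add: "ffact m (a + b) = ffact m a * ffact (m - int a) b"
  by (simp add: ffact_eq_pochhammer_neg pochhammer_product' power_add)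

lemma ffact_of_nat_eq_0: "x < k \<Longrightarrow> ffact (int x) k = 0"
  unfolding ffact_def by (rule prod_zero) auto

lemma ffact_of_nat_self: "ffact (int x) x = int (fact x)"
  by (simp add: ffact_eq_pochhammer flip: pochhammer_fact)

lemma ffact_vandermonde_alternating:
  "(\<Sum>j\<le>M. int (M choose j) * (-1) ^ j * ffact (a - int j) (M - j) * ffact m j) = ffact (a - m) M"
proof -
  have "ffact (a - m) M = pochhammer (- m + (a - int M + 1)) M"
    by (simp add: ffact_eq_pochhammer algebra_simps)
  also have "\<dots> = (\<Sum>j\<le>M. int (M choose j) * pochhammer (- m) j * pochhammer (a - int M + 1) (M - j))"
    by (rule pochhammer_binomial_sum)
  also have "\<dots> = (\<Sum>j\<le>M. int (M choose j) * (-1) ^ j * ffact (a - int j) (M - j) * ffact m j)"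
  proof (intro sum.cong refl)
    fix j assume "j \<in> {..M}"
    then have "pochhammer (a - int M + 1) (M - j) = ffact (a - int j) (M - j)"
      by (simp add: ffact_eq_pochhammer of_nat_diff)
    moreover have "pochhammer (- m) j = (-1) ^ j * ffact m j"
      by (simp add: ffact_eq_pochhammer_neg)
    ultimately show "int (M choose j) * pochhammer (- m) j * pochhammer (a - int M + 1) (M - j)
        = int (M choose j) * (-1) ^ j * ffact (a - int j) (M - j) * ffact m j"
      by simp
  qed
  finally show ?thesis ..
qed

lemma binomial_binomial_ffact_sum:
  assumes "i \<le> N"
  shows "(\<Sum>k\<in>{0..N}. int (N choose k) * int (k choose i) * (-1) ^ k
            * ffact (a - int k) (N - k) * ffact m (k - i))
         = int (N choose i) * (-1) ^ i * ffact (a - int i - m) (N - i)"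
proof -
  let ?f = "\<lambda>k. int (N choose k) * int (k choose i) * (-1) ^ k
              * ffact (a - int k) (N - k) * ffact m (k - i)"
  have "(\<Sum>k\<in>{0..N}. ?f k) = (\<Sum>k\<in>{i..N}. ?f k)"
    by (rule sum.mono_neutral_right) auto
  also have "\<dots> = (\<Sum>j\<le>N - i. ?f (i + j))"
    using sum.shift_bounds_cl_nat_ivl[of ?f 0 i "N - i"] assms
    by (simp add: atLeast0AtMost add.commute)
  also have "\<dots> = (\<Sum>j\<le>N - i. int (N choose i) * (-1) ^ i
      * (int (N - i choose j) * (-1) ^ j * ffact (a - int i - int j) (N - i - j) * ffact m j))"
  proof (intro sum.cong refl)
    fix j assume "j \<in> {..N - i}"
    then have "int (N choose (i + j)) * int (i + j choose i) = int (N choose i) * int (N - i choose j)"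
      using choose_mult[of i "i + j" N] assms by (simp flip: of_nat_mult)
    then show "?f (i + j) = int (N choose i) * (-1) ^ i
      * (int (N - i choose j) * (-1) ^ j * ffact (a - int i - int j) (N - i - j) * ffact m j)"
      by (simp add: power_add algebra_simps)
  qed
  also have "\<dots> = int (N choose i) * (-1) ^ i * ffact (a - int i - m) (N - i)"
    using ffact_vandermonde_alternating[of "N - i" "a - int i" m] by (simp flip: sum_distrib_left)
  finally show ?thesis .
qed

lemma binomial_binomial_ffact_alternating_sum:
  "(\<Sum>k\<in>{0..N}. int (N choose k) * int (k choose i) * (-1) ^ k * ffact (int k - int i) (N - i))
   = (-1) ^ N * int (N choose i) * int (fact (N - i))"
proof -
  let ?f = "\<lambda>k. int (N choose k) * int (k choose i) * (-1) ^ k * ffact (int k - int i) (N - i)"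
  have "?f k = 0" if "k < N" for k
  proof (cases "k < i")
    case False
    with that have "ffact (int (k - i)) (N - i) = 0"
      by (intro ffact_of_nat_eq_0) simp
    with False show ?thesis by (simp add: of_nat_diff)
  qed simp
  then have "(\<Sum>k\<in>{0..N}. ?f k) = ?f N"
    by (subst sum.mono_neutral_right[of "{0..N}" "{N}"]) auto
  also have "\<dots> = (-1) ^ N * int (N choose i) * int (fact (N - i))"
    by (cases "i \<le> N") (simp_all add: ffact_of_nat_self of_nat_diff binomial_eq_0 flip: of_nat_diff)
  finally show ?thesis .
qed

lemma ffact_diff_mult_ffact_add:
  assumes "i1 \<le> N" and "i \<le> i2"
  shows "ffact (a - int i1) (N - i1) * ffact a (i1 + i2 - i) = ffact a N * ffact (a - int i1) (i2 - i)"
proof -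
  have "ffact a (i1 + i2 - i) = ffact a i1 * ffact (a - int i1) (i2 - i)"
    using ffact_add[of a i1 "i2 - i"] assms by simp
  moreover have "ffact a N = ffact a i1 * ffact (a - int i1) (N - i1)"
    using ffact_add[of a i1 "N - i1"] assms by simp
  ultimately show ?thesis by simp
qed

theorem mainTheorem3:
  fixes i N n :: nat
  assumes "i \<le> N" and "N \<le> n"
  shows "(\<Sum>i1\<in>{0..N}. \<Sum>i2\<in>{0..N}.
            int (N choose i1) * int (N choose i2) * int (i1 choose i) * int (i2 choose i)
            * (-1) ^ (i1 + i2)
            * ffact (int n - int i1) (N - i1) * ffact (int n - int i2) (N - i2)
            * ffact (int n) (i1 + i2 - i) * int (fact i))
         = int (fact N) * ffact (int n) N * int (N choose i) * (-1) ^ (N - i)"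
  (is "?L = _")
proof -
  let ?c = "int (fact i) * ffact (int n) N"
  have summand_split: "int (N choose i1) * int (N choose i2) * int (i1 choose i) * int (i2 choose i)
      * (-1) ^ (i1 + i2) * ffact (int n - int i1) (N - i1) * ffact (int n - int i2) (N - i2)
      * ffact (int n) (i1 + i2 - i) * int (fact i)
    = ?c * int (N choose i1) * int (i1 choose i) * (-1) ^ i1
      * (int (N choose i2) * int (i2 choose i) * (-1) ^ i2
         * ffact (int n - int i2) (N - i2) * ffact (int n - int i1) (i2 - i))"
    if "i1 \<le> N" for i1 i2
  proof (cases "i \<le> i2")
    case True
    with that show ?thesis
      using ffact_diff_mult_ffact_add[of i1 N i i2 "int n"] by (simp add: power_add algebra_simps)
  qed (simp add: binomial_eq_0)
  have "?L = (\<Sum>i1\<in>{0..N}. ?c * int (N choose i1) * int (i1 choose i) * (-1) ^ i1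
      * (\<Sum>i2\<in>{0..N}. int (N choose i2) * int (i2 choose i) * (-1) ^ i2
           * ffact (int n - int i2) (N - i2) * ffact (int n - int i1) (i2 - i)))"
    unfolding sum_distrib_left by (intro sum.cong refl summand_split) simp
  also have "\<dots> = (\<Sum>i1\<in>{0..N}. ?c * int (N choose i1) * int (i1 choose i) * (-1) ^ i1
      * (int (N choose i) * (-1) ^ i * ffact (int i1 - int i) (N - i)))"
    by (simp add: binomial_binomial_ffact_sum[OF assms(1)])
  also have "\<dots> = ?c * int (N choose i) * (-1) ^ i * (\<Sum>i1\<in>{0..N}.
      int (N choose i1) * int (i1 choose i) * (-1) ^ i1 * ffact (int i1 - int i) (N - i))"
    by (simp add: sum_distrib_left algebra_simps)
  also have "\<dots> = int (fact i * fact (N - i) * (N choose i)) * ffact (int n) N * int (N choose i)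
      * ((-1) ^ i * (-1) ^ N)"
    by (simp only: binomial_binomial_ffact_alternating_sum) (simp add: algebra_simps)
  also have "\<dots> = int (fact N) * ffact (int n) N * int (N choose i) * (-1) ^ (N - i)"
  proof -
    obtain d where "N = i + d"
      using assms(1) le_Suc_ex by blast
    then show ?thesis
      using binomial_fact_lemma[OF assms(1)] by (simp add: power_add)
  qed
  finally show ?thesis .
qed

end
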